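(* Let $a>0$, $D_L>0$, $\ell>0$, and let $v_e:[0,\ell]\to\mathbb R$ be continuous with $a<v_e(x)<2a$ for all $x\in[0,\ell]$. For $\lambda\in\mathbb C$ with $\mathrm{Re}(\lambda)\ge0$ define $$f(x,\lambda)=\frac{(\lambda+1)\,v_e(x)^2}{\lambda-1+2a/v_e(x)}+\lambda .$$ Then $f(x,\lambda)$ is well defined (the denominator is nonzero) and $\mathrm{Re}\,f(x,\lambda)>0$ for all $x\in[0,\ell]$. Moreover, if $\eta\in C^2((0,\ell))\cap C^1([0,\ell])$ is a complex-valued solution of $$D_L\,\eta_{xx}-f(x,\lambda)\,\eta=0\ \text{ on }(0,\ell),\qquad \eta(0)=0,\quad \eta_x(\ell)=0,$$ then $\eta\equiv0$ on $[0,\ell]$; in particular $\eta_x(0)=0$.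
   Context: This is the outer eigenvalue problem arising in the linear stability analysis of Schnakenberg spike equilibria, where $v_e$ is the outer steady-state activator profile. *)

theory Defs
  imports "HOL-Analysis.Analysis"
begin

definition schnak_f :: "real \<Rightarrow> (real \<Rightarrow> real) \<Rightarrow> real \<Rightarrow> complex \<Rightarrow> complex" where
  "schnak_f a ve x lam =
     (lam + 1) * complex_of_real ((ve x)\<^sup>2) / (lam - 1 + complex_of_real (2 * a / ve x)) + lam"

end

theory Submission
  imports Defs
begin

text \<open>Writing \<open>c = 2a/v\<^sub>e - 1 > 0\<close>, the denominator is \<open>\<lambda> + c\<close> and the real part of
  \<open>(\<lambda>+1)/(\<lambda>+c)\<close> has the sign of \<open>(Re \<lambda> + 1)(Re \<lambda> + c) + (Im \<lambda>)\<^sup>2 > 0\<close>, so \<open>Re f > 0\<close>.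
  For the boundary value problem, the energy \<open>E = Re (\<eta>' \<eta>\<^sup>*)\<close> has derivative
  \<open>|\<eta>'|\<^sup>2 + Re f |\<eta>|\<^sup>2 / D\<^sub>L \<ge> 0\<close> and vanishes at both ends by the boundary conditions;
  hence it is constant, its derivative vanishes, and so does \<open>\<eta>\<close>.\<close>

lemma Re_shifted_quotient_pos:
  fixes lam :: complex and c w :: real
  assumes "Re lam \<ge> 0" and "c > 0" and "w > 0"
  shows "Re ((lam + 1) * complex_of_real w / (lam + complex_of_real c)) > 0"
proof -
  define z where "z = lam + complex_of_real c"
  have "Re z > 0"
    unfolding z_def using assms by simp
  then have den: "(Re z)\<^sup>2 + (Im z)\<^sup>2 > 0"
    by (simp add: add_pos_nonneg)
  have num_eq: "Re ((lam + 1) * complex_of_real w) * Re z + Im ((lam + 1) * complex_of_real w) * Im z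
      = w * ((Re lam + 1) * (Re lam + c) + (Im lam)\<^sup>2)"
    unfolding z_def by (simp add: algebra_simps power2_eq_square)
  have "(Re lam + 1) * (Re lam + c) + (Im lam)\<^sup>2 > 0"
    using assms by (simp add: add_pos_nonneg)
  then have "Re ((lam + 1) * complex_of_real w) * Re z + Im ((lam + 1) * complex_of_real w) * Im z > 0"
    unfolding num_eq using \<open>w > 0\<close> by simp
  then show ?thesis
    unfolding z_def[symmetric] Re_divide using den by simp
qed

lemma schnak_f_denominator_nonzero_and_Re_pos:
  fixes a x :: real and ve :: "real \<Rightarrow> real" and lam :: complex
  assumes "a > 0" and "a < ve x" and "ve x < 2 * a" and "Re lam \<ge> 0"
  shows "lam - 1 + complex_of_real (2 * a / ve x) \<noteq> 0 \<and> Re (schnak_f a ve x lam) > 0"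
proof
  define c where "c = 2 * a / ve x - 1"
  have "c > 0"
    using assms unfolding c_def by (simp add: field_simps)
  have den: "lam - 1 + complex_of_real (2 * a / ve x) = lam + complex_of_real c"
    unfolding c_def by (simp add: algebra_simps)
  have "Re (lam + complex_of_real c) > 0"
    using \<open>c > 0\<close> \<open>Re lam \<ge> 0\<close> by simp
  then show "lam - 1 + complex_of_real (2 * a / ve x) \<noteq> 0"
    unfolding den by (metis less_irrefl zero_complex.sel(1))
  have "Re ((lam + 1) * complex_of_real ((ve x)\<^sup>2) / (lam + complex_of_real c)) > 0"
    using \<open>c > 0\<close> assms by (intro Re_shifted_quotient_pos) auto
  then show "Re (schnak_f a ve x lam) > 0"
    unfolding schnak_f_def den using \<open>Re lam \<ge> 0\<close> by simp
qed

lemma has_real_derivative_Re_mult_cnj: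
  fixes eta eta' eta'' :: "real \<Rightarrow> complex"
  assumes "(eta has_vector_derivative eta' x) (at x)"
    and "(eta' has_vector_derivative eta'' x) (at x)"
  shows "((\<lambda>t. Re (eta' t * cnj (eta t))) has_real_derivative
           (cmod (eta' x))\<^sup>2 + Re (eta'' x * cnj (eta x))) (at x)"
proof -
  have "((\<lambda>t. eta' t * cnj (eta t)) has_vector_derivative
          eta' x * cnj (eta' x) + eta'' x * cnj (eta x)) (at x)"
    by (intro has_vector_derivative_mult has_vector_derivative_cnj assms)
  from has_field_derivative_Re[OF this] show ?thesis
    by (simp flip: complex_norm_square)
qed

lemma DERIV_nonneg_vanishing_endpoints_imp_deriv_zero:
  fixes E D :: "real \<Rightarrow> real"
  assumes "continuous_on {a..b} E" and "E a = 0" and "E b = 0"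
    and deriv: "\<And>x. x \<in> {a<..<b} \<Longrightarrow> (E has_real_derivative D x) (at x)"
    and nonneg: "\<And>x. x \<in> {a<..<b} \<Longrightarrow> D x \<ge> 0"
    and "x \<in> {a<..<b}"
  shows "D x = 0"
proof -
  have mono: "E u \<le> E v" if "a \<le> u" "u \<le> v" "v \<le> b" for u v
  proof (rule DERIV_nonneg_imp_increasing_open[OF \<open>u \<le> v\<close>])
    show "\<exists>y. (E has_real_derivative y) (at t) \<and> y \<ge> 0" if "u < t" "t < v" for t
    proof -
      have "t \<in> {a<..<b}"
        using that \<open>a \<le> u\<close> \<open>v \<le> b\<close> by auto
      then show ?thesis
        using deriv nonneg by blast
    qed
    show "continuous_on {u..v} E"
      using continuous_on_subset[OF \<open>continuous_on {a..b} E\<close>] that by auto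
  qed
  have zero: "E y = 0" if "y \<in> {a..b}" for y
  proof -
    have "E a \<le> E y" and "E y \<le> E b"
      using that by (auto intro: mono)
    then show ?thesis
      using assms(2,3) by linarith
  qed
  show ?thesis
  proof (rule DERIV_local_const[OF deriv[OF \<open>x \<in> {a<..<b}\<close>]])
    show "0 < min (x - a) (b - x)"
      using \<open>x \<in> {a<..<b}\<close> by simp
    show "\<forall>y. \<bar>x - y\<bar> < min (x - a) (b - x) \<longrightarrow> E x = E y"
    proof (intro allI impI)
      fix y
      assume "\<bar>x - y\<bar> < min (x - a) (b - x)"
      then have "y \<in> {a..b}"
        unfolding abs_less_iff by simp
      moreover have "x \<in> {a..b}"
        using \<open>x \<in> {a<..<b}\<close> by simp
      ultimately show "E x = E y"
        using zero by metis
    qed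
  qed
qed

lemma continuous_on_vanishing_on_open_interval:
  fixes f :: "real \<Rightarrow> 'a::t2_space"
  assumes "continuous_on {a..b} f" and "a < b" and "\<And>x. x \<in> {a<..<b} \<Longrightarrow> f x = c"
    and "x \<in> {a..b}"
  shows "f x = c"
proof -
  have "closed {y \<in> {a..b}. f y = c}"
    using continuous_closed_preimage_constant[OF assms(1)] by simp
  moreover have "{a<..<b} \<subseteq> {y \<in> {a..b}. f y = c}"
    using assms(3) by auto
  ultimately have "closure {a<..<b} \<subseteq> {y \<in> {a..b}. f y = c}"
    by (rule closure_minimal[rotated])
  then show ?thesis
    using assms(2,4) by auto
qed

lemma dirichlet_neumann_solution_zero:
  fixes eta eta' eta'' q :: "real \<Rightarrow> complex" and d l :: real
  assumes "d > 0" and "l > 0"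
    and "continuous_on {0..l} eta'"
    and deriv1: "\<And>x. x \<in> {0..l} \<Longrightarrow> (eta has_vector_derivative eta' x) (at x within {0..l})"
    and deriv2: "\<And>x. x \<in> {0<..<l} \<Longrightarrow> (eta' has_vector_derivative eta'' x) (at x)"
    and ode: "\<And>x. x \<in> {0<..<l} \<Longrightarrow> complex_of_real d * eta'' x = q x * eta x"
    and Re_q: "\<And>x. x \<in> {0<..<l} \<Longrightarrow> Re (q x) > 0"
    and "eta 0 = 0" and "eta' l = 0"
    and "x \<in> {0..l}"
  shows "eta x = 0"
proof -
  define E where "E t = Re (eta' t * cnj (eta t))" for t
  define D where "D t = (cmod (eta' t))\<^sup>2 + Re (q t) * (cmod (eta t))\<^sup>2 / d" for t
  have cont: "continuous_on {0..l} eta"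
    using deriv1 by (meson continuous_on_eq_continuous_within has_vector_derivative_continuous)
  have deriv_E: "(E has_real_derivative D t) (at t)" if t: "t \<in> {0<..<l}" for t
  proof -
    have "(eta has_vector_derivative eta' t) (at t)"
      using deriv1[of t] t at_within_Icc_at[of 0 t l] by auto
    from has_real_derivative_Re_mult_cnj[of eta eta' t eta'', OF this deriv2[OF t]]
    have "(E has_real_derivative (cmod (eta' t))\<^sup>2 + Re (eta'' t * cnj (eta t))) (at t)"
      unfolding E_def .
    moreover have "eta'' t = q t * eta t / d"
      using ode[OF t] \<open>d > 0\<close> by (simp add: field_simps)
    then have "eta'' t * cnj (eta t) = q t * complex_of_real ((cmod (eta t))\<^sup>2) / d"
      unfolding complex_norm_square by (simp add: ac_simps)
    ultimately show ?thesis
      unfolding D_def by (simp add: Re_divide_of_real)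
  qed
  have interior_zero: "eta t = 0" if t: "t \<in> {0<..<l}" for t
  proof -
    have "D t = 0"
    proof (rule DERIV_nonneg_vanishing_endpoints_imp_deriv_zero[OF _ _ _ deriv_E _ t])
      show "continuous_on {0..l} E"
        unfolding E_def by (intro continuous_intros cont \<open>continuous_on {0..l} eta'\<close>)
      show "E 0 = 0" and "E l = 0"
        unfolding E_def using \<open>eta 0 = 0\<close> \<open>eta' l = 0\<close> by simp_all
      show "D s \<ge> 0" if "s \<in> {0<..<l}" for s
        unfolding D_def using Re_q[OF that] \<open>d > 0\<close> by simp
    qed
    moreover have "Re (q t) * (cmod (eta t))\<^sup>2 / d \<ge> 0"
      using Re_q[OF t] \<open>d > 0\<close> by simp
    moreover have "(cmod (eta' t))\<^sup>2 \<ge> 0"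
      by simp
    ultimately have "Re (q t) * (cmod (eta t))\<^sup>2 / d = 0"
      unfolding D_def by linarith
    then show ?thesis
      using Re_q[OF t] \<open>d > 0\<close> by simp
  qed
  show ?thesis
    using continuous_on_vanishing_on_open_interval[OF cont \<open>l > 0\<close> interior_zero \<open>x \<in> {0..l}\<close>] .
qed

lemma has_vector_derivative_vanishing_on_interval:
  fixes f :: "real \<Rightarrow> 'a::real_normed_vector"
  assumes "a < b" and "x \<in> {a..b}" and "\<And>y. y \<in> {a..b} \<Longrightarrow> f y = 0"
    and "(f has_vector_derivative f') (at x within {a..b})"
  shows "f' = 0"
proof -
  have "((\<lambda>_. 0) has_vector_derivative f') (at x within {a..b})"
    using has_vector_derivative_transform_within[OF assms(4), of 1] assms(2,3) by auto
  then show ?thesis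
    using vector_derivative_unique_within_closed_interval[of a b x] has_vector_derivative_const assms(1,2)
    by (metis cbox_interval)
qed

theorem mainTheorem9:
  fixes a DL l :: real and ve :: "real \<Rightarrow> real" and lam :: complex
  assumes ha: "a > 0" and hDL: "DL > 0" and hl: "l > 0"
    and hcont: "continuous_on {0..l} ve"
    and hbnd: "\<And>x. x \<in> {0..l} \<Longrightarrow> a < ve x \<and> ve x < 2 * a"
    and hlam: "Re lam \<ge> 0"
  shows "(\<forall>x\<in>{0..l}. lam - 1 + complex_of_real (2 * a / ve x) \<noteq> 0
                      \<and> Re (schnak_f a ve x lam) > 0)
       \<and> (\<forall>(eta :: real \<Rightarrow> complex) eta' eta''.
            continuous_on {0..l} eta'
          \<and> (\<forall>x\<in>{0..l}. (eta has_vector_derivative eta' x) (at x within {0..l}))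
          \<and> continuous_on {0<..<l} eta''
          \<and> (\<forall>x\<in>{0<..<l}. (eta' has_vector_derivative eta'' x) (at x))
          \<and> (\<forall>x\<in>{0<..<l}. complex_of_real DL * eta'' x - schnak_f a ve x lam * eta x = 0)
          \<and> eta 0 = 0 \<and> eta' l = 0
          \<longrightarrow> (\<forall>x\<in>{0..l}. eta x = 0) \<and> eta' 0 = 0)"
proof (intro conjI allI impI ballI)
  have f_props: "lam - 1 + complex_of_real (2 * a / ve x) \<noteq> 0 \<and> Re (schnak_f a ve x lam) > 0"
    if "x \<in> {0..l}" for x
    using schnak_f_denominator_nonzero_and_Re_pos ha hbnd[OF that] hlam by blast
  then show "x \<in> {0..l} \<Longrightarrow> lam - 1 + complex_of_real (2 * a / ve x) \<noteq> 0"
    and "x \<in> {0..l} \<Longrightarrow> Re (schnak_f a ve x lam) > 0" for x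
    by simp_all
  fix eta eta' eta'' :: "real \<Rightarrow> complex"
  assume "continuous_on {0..l} eta'
          \<and> (\<forall>x\<in>{0..l}. (eta has_vector_derivative eta' x) (at x within {0..l}))
          \<and> continuous_on {0<..<l} eta''
          \<and> (\<forall>x\<in>{0<..<l}. (eta' has_vector_derivative eta'' x) (at x))
          \<and> (\<forall>x\<in>{0<..<l}. complex_of_real DL * eta'' x - schnak_f a ve x lam * eta x = 0)
          \<and> eta 0 = 0 \<and> eta' l = 0"
  then have cont: "continuous_on {0..l} eta'"
    and deriv1: "\<And>x. x \<in> {0..l} \<Longrightarrow> (eta has_vector_derivative eta' x) (at x within {0..l})"
    and deriv2: "\<And>x. x \<in> {0<..<l} \<Longrightarrow> (eta' has_vector_derivative eta'' x) (at x)"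
    and ode: "\<And>x. x \<in> {0<..<l} \<Longrightarrow> complex_of_real DL * eta'' x = schnak_f a ve x lam * eta x"
    and "eta 0 = 0" and "eta' l = 0"
    by auto
  have Re_f: "Re (schnak_f a ve x lam) > 0" if "x \<in> {0<..<l}" for x
    using f_props that by simp
  have eta_zero: "eta x = 0" if "x \<in> {0..l}" for x
    by (rule dirichlet_neumann_solution_zero[OF hDL hl cont deriv1 deriv2 ode Re_f
          \<open>eta 0 = 0\<close> \<open>eta' l = 0\<close> that])
  then show "x \<in> {0..l} \<Longrightarrow> eta x = 0" for x .
  have left_end: "0 \<in> {0..l}"
    using hl by simp
  show "eta' 0 = 0"
    by (rule has_vector_derivative_vanishing_on_interval[OF hl left_end eta_zero deriv1[OF left_end]])
qed

end
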